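(* Let $s\ge 0$ and $d\ge1$, and let $(\delta_1,\ldots,\delta_s,\delta_{s+1})$ and $(e_1,\ldots,e_s)$ be sequences of integers with $\delta_i\neq e_j$ for all $i,j$, satisfying $0<\delta_1\le\cdots\le\delta_s\le\delta_{s+1}=d$, $0\le e_1\le\cdots\le e_s<d$, and $e_j<\delta_j$ for $1\le j\le s$. Let $n=\sum_{j=1}^{s+1}\delta_j-\sum_{j=1}^{s}e_j$. Then there is a forest $\Delta$ on $[n]$ of dimension $d-1$ whose $f$-vector $(f_0,\ldots,f_{d-1})$ satisfies $$\sum_{i=0}^{d} f_{i-1}x^i=\sum_{j=1}^{s+1}(1+x)^{\delta_j}-\sum_{j=1}^{s}(1+x)^{e_j},$$ where $f_{-1}=1$.
   Context: A simplicial complex $\Delta$ on $[n]$ is a collection of subsets of $[n]$ containing all singletons $\{i\}$, $i\in[n]$, and closed under taking subsets; $\dim\Delta=d-1$ where $d$ is the maximal face size; facets are maximal faces; $f_i$ is the number of faces with $i+1$ elements. For facets $F_{i_1},\ldots,F_{i_q}$, $\langle F_{i_1},\ldots,F_{i_q}\rangle$ is the subcomplex of all faces contained in some $F_{i_j}$. A facet $F$ of a complex is a leaf if there is another facet $G\neq F$ with $H\cap F\subset G\cap F$ for all facets $H\neq F$ (a complex with a single facet is regarded as having that facet as a leaf). A forest is a simplicial complex such that for every nonempty subset $\{F_{i_1},\ldots,F_{i_q}\}$ of its facets, $\langle F_{i_1},\ldots,F_{i_q}\rangle$ has a leaf. *)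

theory Defs
  imports "HOL-Computational_Algebra.Polynomial"
begin

definition simplicial_complex :: "nat \<Rightarrow> nat set set \<Rightarrow> bool" where
  "simplicial_complex n \<Delta> \<longleftrightarrow>
     (\<forall>F\<in>\<Delta>. F \<subseteq> {1..n}) \<and> (\<forall>i\<in>{1..n}. {i} \<in> \<Delta>) \<and> (\<forall>F\<in>\<Delta>. \<forall>G. G \<subseteq> F \<longrightarrow> G \<in> \<Delta>)"

text \<open>Maximal face size d; the dimension is d - 1.\<close>
definition max_face_size :: "nat set set \<Rightarrow> nat" where
  "max_face_size \<Delta> = Max (card ` \<Delta>)"

definition facets :: "nat set set \<Rightarrow> nat set set" where
  "facets \<Delta> = {F \<in> \<Delta>. \<forall>G\<in>\<Delta>. F \<subseteq> G \<longrightarrow> G = F}"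

definition generated :: "nat set set \<Rightarrow> nat set set" where
  "generated S = {G. \<exists>F\<in>S. G \<subseteq> F}"

definition is_leaf :: "nat set set \<Rightarrow> nat set \<Rightarrow> bool" where
  "is_leaf \<Delta> F \<longleftrightarrow> F \<in> facets \<Delta> \<and>
     (facets \<Delta> = {F} \<or>
      (\<exists>G\<in>facets \<Delta>. G \<noteq> F \<and> (\<forall>H\<in>facets \<Delta>. H \<noteq> F \<longrightarrow> H \<inter> F \<subseteq> G \<inter> F)))"

definition forest :: "nat \<Rightarrow> nat set set \<Rightarrow> bool" where
  "forest n \<Delta> \<longleftrightarrow> simplicial_complex n \<Delta> \<and>
     (\<forall>S. S \<subseteq> facets \<Delta> \<longrightarrow> S \<noteq> {} \<longrightarrow> (\<exists>F. is_leaf (generated S) F))"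

text \<open>Number of faces with k elements; fnum \<Delta> (i+1) = f_i, and fnum \<Delta> 0 = f_{-1} = 1.\<close>
definition fnum :: "nat set set \<Rightarrow> nat \<Rightarrow> nat" where
  "fnum \<Delta> k = card {F \<in> \<Delta>. card F = k}"

end

theory Submission
  imports Defs
begin

text \<open>Put \<open>e\<^sub>s\<^sub>+\<^sub>1 = e\<^sub>s\<close> and let the facet \<open>F\<^sub>j\<close> consist of the initial segment \<open>{1..e\<^sub>j}\<close> of
  a common core together with \<open>\<delta>\<^sub>j - e\<^sub>j\<close> private vertices. Two facets then meet exactly in
  \<open>{1..min e\<^sub>i e\<^sub>j}\<close>, so in every subfamily the facet with the smallest \<open>e\<^sub>j\<close> is a leaf.
  Adding the facets in order, \<open>F\<^sub>k\<^sub>+\<^sub>1\<close> meets the complex generated by \<open>F\<^sub>1, \<dots>, F\<^sub>k\<close> in the full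
  simplex on \<open>{1..e\<^sub>k}\<close> (the \<open>e\<^sub>j\<close> are increasing), so the \<open>f\<close>-polynomial grows by
  \<open>(1 + x)\<^bsup>\<delta>\<^sub>k\<^sub>+\<^sub>1\<^esup> - (1 + x)\<^bsup>e\<^sub>k\<^esup>\<close>. The core has \<open>e\<^sub>s\<close> vertices, which gives \<open>n\<close> vertices in total.\<close>

definition face_poly :: "nat set set \<Rightarrow> int poly" where
  "face_poly A = (\<Sum>G\<in>A. [:0, 1:] ^ card G)"

lemma face_poly_Pow: "finite X \<Longrightarrow> face_poly (Pow X) = [:1, 1:] ^ card X"
proof (induction X rule: finite_induct)
  case empty
  then show ?case by (simp add: face_poly_def)
next
  case (insert x X)
  have inj: "inj_on (insert x) (Pow X)"
    using insert(2) unfolding inj_on_def by (metis Diff_insert_absorb PowD subsetD)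
  have "face_poly (Pow (insert x X)) = face_poly (Pow X) + (\<Sum>G\<in>insert x ` Pow X. [:0, 1:] ^ card G)"
    unfolding face_poly_def Pow_insert using insert by (subst sum.union_disjoint) auto
  also have "(\<Sum>G\<in>insert x ` Pow X. [:0, 1:] ^ card G) = (\<Sum>G\<in>Pow X. [:0, 1:] ^ card (insert x G))"
    using inj by (simp add: sum.reindex)
  also have "\<dots> = (\<Sum>G\<in>Pow X. [:0, 1:] * [:0, 1:] ^ card G)"
  proof (rule sum.cong)
    fix G assume "G \<in> Pow X"
    then have "finite G" "x \<notin> G" using insert finite_subset by auto
    then show "[:0, 1:] ^ card (insert x G) = [:0, 1:] * [:0, 1:] ^ card G" by simp
  qed simp
  also have "\<dots> = [:0, 1:] * face_poly (Pow X)"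
    unfolding face_poly_def by (simp add: sum_distrib_left)
  finally show ?case using insert by (simp add: algebra_simps)
qed

lemma sum_monom_fnum_eq_face_poly:
  assumes "finite A" "\<forall>G\<in>A. card G \<le> d"
  shows "(\<Sum>i\<le>d. monom (int (fnum A i)) i) = face_poly A"
proof -
  have "face_poly A = (\<Sum>i\<le>d. \<Sum>G\<in>{G\<in>A. card G = i}. [:0, 1:] ^ card G)"
    unfolding face_poly_def using assms by (subst sum.group[symmetric, where g=card]) auto
  also have "\<dots> = (\<Sum>i\<le>d. of_nat (fnum A i) * [:0, 1:] ^ i)"
    by (simp add: fnum_def)
  also have "\<dots> = (\<Sum>i\<le>d. monom (int (fnum A i)) i)"
    by (simp add: monom_altdef of_nat_poly)
  finally show ?thesis by simp
qed

lemma generated_eq_UN_Pow: "generated S = (\<Union>A\<in>S. Pow A)"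
  unfolding generated_def by auto

lemma facets_antichain: "A \<in> facets \<Delta> \<Longrightarrow> B \<in> facets \<Delta> \<Longrightarrow> A \<subseteq> B \<Longrightarrow> A = B"
  unfolding facets_def by blast

lemma facets_generated:
  assumes "\<And>A B. A \<in> S \<Longrightarrow> B \<in> S \<Longrightarrow> A \<subseteq> B \<Longrightarrow> A = B"
  shows "facets (generated S) = S"
proof
  show "facets (generated S) \<subseteq> S"
  proof
    fix F assume "F \<in> facets (generated S)"
    then obtain A where "A \<in> S" "F \<subseteq> A" "\<forall>G\<in>generated S. F \<subseteq> G \<longrightarrow> G = F"
      unfolding facets_def generated_def by auto
    then have "A = F"
      unfolding generated_def by blast
    with \<open>A \<in> S\<close> show "F \<in> S" by simp
  qed
  show "S \<subseteq> facets (generated S)"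
    unfolding facets_def generated_def using assms by (auto dest: subset_trans)
qed

lemma simplicial_complex_generated:
  assumes "\<Union>S = {1..n}"
  shows "simplicial_complex n (generated S)"
  unfolding simplicial_complex_def generated_def
proof (intro conjI ballI allI impI)
  show "{i} \<in> {G. \<exists>F\<in>S. G \<subseteq> F}" if "i \<in> {1..n}" for i
    using that assms by blast
qed (use assms in blast)+

lemma max_face_size_generated:
  assumes "finite S" "\<forall>A\<in>S. finite A \<and> card A \<le> d" "A \<in> S" "card A = d"
  shows "max_face_size (generated S) = d"
  unfolding max_face_size_def
proof (rule Max_eqI)
  show "finite (card ` generated S)"
    using assms(1,2) by (simp add: generated_eq_UN_Pow)
next
  fix k assume "k \<in> card ` generated S"
  then obtain A G where "A \<in> S" "G \<subseteq> A" "k = card G"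
    unfolding generated_def by blast
  then show "k \<le> d"
    using assms(2) card_mono[of A G] by auto
next
  show "d \<in> card ` generated S"
    using assms(3,4) unfolding generated_def by blast
qed

text \<open>A facet of least level is a leaf: every other facet meets it in \<open>K\<close> of its level.\<close>
lemma exists_leaf_if_levelled:
  fixes F :: "'i \<Rightarrow> nat set" and lv :: "'i \<Rightarrow> nat" and K :: "nat \<Rightarrow> nat set"
  assumes facets: "facets \<Delta> = F ` I" and "I \<noteq> {}"
    and inter: "\<And>i j. i \<in> I \<Longrightarrow> j \<in> I \<Longrightarrow> F i \<noteq> F j \<Longrightarrow> F i \<inter> F j = K (min (lv i) (lv j))"
  shows "\<exists>A. is_leaf \<Delta> A"
proof -
  obtain i where i: "i \<in> I" and least: "\<And>j. j \<in> I \<Longrightarrow> lv i \<le> lv j"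
    using ex_has_least_nat[of "\<lambda>j. j \<in> I" _ lv] \<open>I \<noteq> {}\<close> by blast
  have meet: "F j \<inter> F i = K (lv i)" if "j \<in> I" "F j \<noteq> F i" for j
    using inter[OF that(1) i that(2)] least[OF \<open>j \<in> I\<close>] by (simp add: min_absorb2)
  have "is_leaf \<Delta> (F i)"
  proof (cases "facets \<Delta> = {F i}")
    case True
    then show ?thesis unfolding is_leaf_def by simp
  next
    case False
    then obtain j where j: "j \<in> I" "F j \<noteq> F i"
      using facets i by blast
    have "\<forall>H\<in>facets \<Delta>. H \<noteq> F i \<longrightarrow> H \<inter> F i \<subseteq> F j \<inter> F i"
      using meet j unfolding facets by auto
    moreover have "F i \<in> facets \<Delta>" "F j \<in> facets \<Delta>"
      using i j facets by simp_all
    ultimately show ?thesis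
      unfolding is_leaf_def using j(2) by blast
  qed
  then show ?thesis ..
qed

lemma forest_if_levelled:
  fixes F :: "'i \<Rightarrow> nat set" and lv :: "'i \<Rightarrow> nat" and K :: "nat \<Rightarrow> nat set"
  assumes "simplicial_complex n \<Delta>" and facets: "facets \<Delta> = F ` I"
    and inter: "\<And>i j. i \<in> I \<Longrightarrow> j \<in> I \<Longrightarrow> F i \<noteq> F j \<Longrightarrow> F i \<inter> F j = K (min (lv i) (lv j))"
  shows "forest n \<Delta>"
  unfolding forest_def
proof (intro conjI allI impI)
  fix S assume S: "S \<subseteq> facets \<Delta>" "S \<noteq> {}"
  define J where "J = {i \<in> I. F i \<in> S}"
  show "\<exists>A. is_leaf (generated S) A"
  proof (rule exists_leaf_if_levelled)
    have "facets (generated S) = S"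
      by (rule facets_generated) (use S(1) facets_antichain in blast)
    also have "S = F ` J"
      using S(1) unfolding facets J_def by auto
    finally show "facets (generated S) = F ` J" .
    then show "J \<noteq> {}"
      using S(2) \<open>S = F ` J\<close> by auto
    show "F i \<inter> F j = K (min (lv i) (lv j))" if "i \<in> J" "j \<in> J" "F i \<noteq> F j" for i j
      using that inter unfolding J_def by simp
  qed
qed fact

lemma face_poly_generated_telescoping:
  assumes "1 \<le> m" and fin: "\<And>j. finite (F j)" "\<And>k. finite (C k)"
    and inter: "\<And>k. 1 \<le> k \<Longrightarrow> k < m \<Longrightarrow> generated (F ` {1..k}) \<inter> Pow (F (Suc k)) = Pow (C k)"
  shows "face_poly (generated (F ` {1..m}))
    = (\<Sum>j=1..m. [:1, 1:] ^ card (F j)) - (\<Sum>k=1..<m. [:1, 1:] ^ card (C k))"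
  using assms(1) inter
proof (induction m rule: dec_induct)
  case base
  then show ?case by (simp add: generated_eq_UN_Pow face_poly_Pow fin)
next
  case (step k)
  let ?\<Delta> = "generated (F ` {1..k})"
  have generated_Suc: "generated (F ` {1..Suc k}) = ?\<Delta> \<union> Pow (F (Suc k))"
    using step(1) by (auto simp: generated_eq_UN_Pow atLeastAtMostSuc_conv)
  have "face_poly (?\<Delta> \<union> Pow (F (Suc k))) + face_poly (?\<Delta> \<inter> Pow (F (Suc k)))
      = face_poly ?\<Delta> + face_poly (Pow (F (Suc k)))"
    unfolding face_poly_def by (rule sum.union_inter) (auto simp: generated_eq_UN_Pow fin)
  moreover have "face_poly (?\<Delta> \<inter> Pow (F (Suc k))) = [:1, 1:] ^ card (C k)"
    using step by (simp add: face_poly_Pow fin)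
  ultimately have "face_poly (generated (F ` {1..Suc k}))
      = face_poly ?\<Delta> + [:1, 1:] ^ card (F (Suc k)) - [:1, 1:] ^ card (C k)"
    unfolding generated_Suc by (simp add: face_poly_Pow fin algebra_simps)
  then show ?case
    using step by (simp add: sum.atLeastLessThan_Suc)
qed

locale core_forest =
  fixes m :: nat and D E :: "nat \<Rightarrow> nat"
  assumes m_pos: "1 \<le> m"
    and E_less_D: "\<And>j. j \<in> {1..m} \<Longrightarrow> E j < D j"
    and E_step: "\<And>j. j \<in> {1..<m} \<Longrightarrow> E j \<le> E (Suc j)"
    and D_le_last: "\<And>j. j \<in> {1..m} \<Longrightarrow> D j \<le> D m"
begin

definition offset :: "nat \<Rightarrow> nat" where
  "offset j = E m + (\<Sum>i=1..<j. D i - E i)"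

definition facet :: "nat \<Rightarrow> nat set" where
  "facet j = {1..E j} \<union> {offset j<..offset (Suc j)}"

definition complex :: "nat set set" where
  "complex = generated (facet ` {1..m})"

lemma E_mono: "1 \<le> i \<Longrightarrow> i \<le> j \<Longrightarrow> j \<le> m \<Longrightarrow> E i \<le> E j"
  by (rule lift_Suc_mono_le_ivl[where N="{1..<m}"]) (auto intro: E_step)

lemma offset_mono: "i \<le> j \<Longrightarrow> offset i \<le> offset j"
  unfolding offset_def by (auto intro!: sum_mono2)

lemma offset_Suc: "1 \<le> j \<Longrightarrow> offset (Suc j) = offset j + (D j - E j)"
  unfolding offset_def by (simp add: sum.atLeastLessThan_Suc)

lemma E_le_offset: "i \<in> {1..m} \<Longrightarrow> 1 \<le> j \<Longrightarrow> E i \<le> offset j"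
  using E_mono[of i m] offset_mono[of 1 j] by (simp add: offset_def)

lemma blocks_disjoint:
  assumes "i \<noteq> j"
  shows "{offset i<..offset (Suc i)} \<inter> {offset j<..offset (Suc j)} = {}"
proof -
  have "offset (Suc i) \<le> offset j \<or> offset (Suc j) \<le> offset i"
    using assms offset_mono by (metis not_less_eq_eq le_antisym nat_le_linear)
  then show ?thesis by auto
qed

lemma facet_inter:
  assumes "i \<in> {1..m}" "j \<in> {1..m}" "i \<noteq> j"
  shows "facet i \<inter> facet j = {1..min (E i) (E j)}"
proof -
  have "E i \<le> offset j" "E j \<le> offset i"
    using assms E_le_offset by auto
  then show ?thesis
    using blocks_disjoint[OF assms(3)] unfolding facet_def by auto
qed

lemma finite_facet: "finite (facet j)"
  unfolding facet_def by simp

lemma card_facet: "j \<in> {1..m} \<Longrightarrow> card (facet j) = D j"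
  using E_le_offset[of j j] E_less_D[of j] offset_Suc[of j]
  unfolding facet_def by (subst card_Un_disjoint) auto

lemma facet_subset_iff:
  assumes ij: "i \<in> {1..m}" "j \<in> {1..m}"
  shows "facet i \<subseteq> facet j \<longleftrightarrow> i = j"
proof
  assume sub: "facet i \<subseteq> facet j"
  have "Suc (offset i) \<in> facet i"
    using ij E_less_D[of i] offset_Suc[of i] unfolding facet_def by auto
  moreover have "E i \<le> offset i"
    using ij E_le_offset by auto
  ultimately have "\<not> facet i \<subseteq> {1..E i}"
    by auto
  show "i = j"
  proof (rule ccontr)
    assume "i \<noteq> j"
    then have "facet i \<subseteq> {1..min (E i) (E j)}"
      using sub facet_inter[OF ij] by blast
    with \<open>\<not> facet i \<subseteq> {1..E i}\<close> show False
      by auto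
  qed
qed simp

lemma UN_blocks: "(\<Union>j\<in>{1..k}. {offset j<..offset (Suc j)}) = {offset 1<..offset (Suc k)}"
proof (induction k)
  case (Suc k)
  have "offset 1 \<le> offset (Suc k)" "offset (Suc k) \<le> offset (Suc (Suc k))"
    by (simp_all add: offset_mono)
  then show ?case
    using Suc by (auto simp: atLeastAtMostSuc_conv)
qed simp

lemma UN_facet: "(\<Union>j\<in>{1..m}. facet j) = {1..offset (Suc m)}"
proof -
  have "(\<Union>j\<in>{1..m}. {1..E j}) = {1..E m}"
    using E_mono m_pos by fastforce
  moreover have "offset 1 = E m" "E m \<le> offset (Suc m)"
    by (simp_all add: offset_def)
  ultimately show ?thesis
    unfolding facet_def UN_Un_distrib UN_blocks by auto
qed

lemma int_offset_last: "int (offset (Suc m)) = (\<Sum>j=1..m. int (D j)) - (\<Sum>j=1..<m. int (E j))"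
proof -
  have "int (offset (Suc m)) = int (E m) + (\<Sum>j=1..m. int (D j) - int (E j))"
    unfolding offset_def using E_less_D
    by (simp add: atLeastLessThanSuc_atLeastAtMost of_nat_diff less_imp_le)
  also have "\<dots> = (\<Sum>j=1..m. int (D j)) - (\<Sum>j=1..<m. int (E j))"
    using m_pos by (simp add: sum_subtractf atLeastLessThanSuc_atLeastAtMost[symmetric]
        sum.atLeastLessThan_Suc del: atLeastLessThanSuc_atLeastAtMost)
  finally show ?thesis .
qed

lemma facets_complex: "facets complex = facet ` {1..m}"
  unfolding complex_def using facet_subset_iff by (intro facets_generated) blast

lemma forest_complex: "forest (offset (Suc m)) complex"
proof (rule forest_if_levelled[OF _ facets_complex, where K="\<lambda>k. {1..k}" and lv=E])
  show "simplicial_complex (offset (Suc m)) complex"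
    unfolding complex_def using UN_facet by (intro simplicial_complex_generated) simp
  show "facet i \<inter> facet j = {1..min (E i) (E j)}"
    if "i \<in> {1..m}" "j \<in> {1..m}" "facet i \<noteq> facet j" for i j
    using that by (intro facet_inter) auto
qed

lemma max_face_size_complex: "max_face_size complex = D m"
  unfolding complex_def
proof (rule max_face_size_generated[where A="facet m"])
  show "\<forall>A\<in>facet ` {1..m}. finite A \<and> card A \<le> D m"
    using card_facet D_le_last finite_facet by simp
  show "facet m \<in> facet ` {1..m}" "card (facet m) = D m"
    using m_pos card_facet by simp_all
qed simp

lemma generated_inter_next_facet:
  assumes "1 \<le> k" "k < m"
  shows "generated (facet ` {1..k}) \<inter> Pow (facet (Suc k)) = Pow {1..E k}"
proof
  show "generated (facet ` {1..k}) \<inter> Pow (facet (Suc k)) \<subseteq> Pow {1..E k}"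
  proof
    fix G assume "G \<in> generated (facet ` {1..k}) \<inter> Pow (facet (Suc k))"
    then obtain j where j: "j \<in> {1..k}" and G: "G \<subseteq> facet j \<inter> facet (Suc k)"
      unfolding generated_def by auto
    note G
    also have "facet j \<inter> facet (Suc k) = {1..min (E j) (E (Suc k))}"
      using j assms by (intro facet_inter) auto
    also have "\<dots> \<subseteq> {1..E k}"
      using E_mono[of j k] j assms by auto
    finally show "G \<in> Pow {1..E k}" by simp
  qed
  have "{1..E k} \<subseteq> facet k" "{1..E k} \<subseteq> facet (Suc k)"
    using E_step[of k] assms unfolding facet_def by auto
  moreover have "k \<in> {1..k}"
    using assms by simp
  ultimately show "Pow {1..E k} \<subseteq> generated (facet ` {1..k}) \<inter> Pow (facet (Suc k))"
    unfolding generated_def by blast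
qed

lemma f_polynomial_complex:
  "(\<Sum>i\<le>D m. monom (int (fnum complex i)) i)
    = (\<Sum>j=1..m. [:1, 1:] ^ D j) - (\<Sum>j=1..<m. [:1, 1:] ^ E j)"
proof -
  have "(\<Sum>i\<le>D m. monom (int (fnum complex i)) i) = face_poly complex"
  proof (rule sum_monom_fnum_eq_face_poly)
    show "finite complex"
      unfolding complex_def generated_eq_UN_Pow by (simp add: finite_facet)
    show "\<forall>G\<in>complex. card G \<le> D m"
    proof
      fix G assume "G \<in> complex"
      then obtain j where j: "j \<in> {1..m}" and "G \<subseteq> facet j"
        unfolding complex_def generated_def by blast
      then have "card G \<le> card (facet j)"
        by (simp add: card_mono finite_facet)
      with j show "card G \<le> D m"
        using card_facet D_le_last by fastforce
    qed
  qed
  also have "\<dots> = (\<Sum>j=1..m. [:1, 1:] ^ card (facet j)) - (\<Sum>k=1..<m. [:1, 1:] ^ card {1..E k})"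
    unfolding complex_def
    by (rule face_poly_generated_telescoping[OF m_pos finite_facet finite_atLeastAtMost
          generated_inter_next_facet])
  also have "\<dots> = (\<Sum>j=1..m. [:1, 1:] ^ D j) - (\<Sum>j=1..<m. [:1, 1:] ^ E j)"
    by (simp add: card_facet)
  finally show ?thesis .
qed

end

lemma core_forest_padded:
  fixes s :: nat and \<delta> e :: "nat \<Rightarrow> nat"
  assumes "0 < \<delta> 1"
    and \<delta>_step: "\<forall>j\<in>{1..s}. \<delta> j \<le> \<delta> (j + 1)"
    and e_step: "\<forall>j\<in>{1..<s}. e j \<le> e (j + 1)"
    and e_less: "\<forall>j\<in>{1..s}. e j < \<delta> j"
    and "\<forall>j\<in>{1..s}. e j < \<delta> (s + 1)"
  shows "core_forest (s + 1) \<delta> (e(s + 1 := if s = 0 then 0 else e s))"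
    (is "core_forest _ _ ?E")
proof
  show "?E j < \<delta> j" if j: "j \<in> {1..s + 1}" for j
  proof (cases "j \<le> s")
    case True
    then show ?thesis using j e_less by simp
  next
    case False
    then have "j = s + 1" using j by simp
    then show ?thesis using assms(1,5) by (cases "s = 0") simp_all
  qed
  show "?E j \<le> ?E (Suc j)" if j: "j \<in> {1..<s + 1}" for j
  proof (cases "Suc j \<le> s")
    case True
    then show ?thesis using j e_step by simp
  next
    case False
    then have "j = s" "s \<noteq> 0" using j by auto
    then show ?thesis by simp
  qed
  show "\<delta> j \<le> \<delta> (s + 1)" if "j \<in> {1..s + 1}" for j
    by (rule lift_Suc_mono_le_ivl[where N="{1..s}"]) (use \<delta>_step that in auto)
qed simp

theorem lemma2p3:
  fixes s d n :: nat and \<delta> e :: "nat \<Rightarrow> nat"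
  assumes "d \<ge> 1"
    and "\<forall>i\<in>{1..s+1}. \<forall>j\<in>{1..s}. \<delta> i \<noteq> e j"
    and "0 < \<delta> 1"
    and "\<forall>j\<in>{1..s}. \<delta> j \<le> \<delta> (j+1)"
    and "\<delta> (s+1) = d"
    and "\<forall>j\<in>{1..<s}. e j \<le> e (j+1)"
    and "\<forall>j\<in>{1..s}. e j < d"
    and "\<forall>j\<in>{1..s}. e j < \<delta> j"
    and "int n = (\<Sum>j=1..s+1. int (\<delta> j)) - (\<Sum>j=1..s. int (e j))"
  shows "\<exists>\<Delta>. forest n \<Delta> \<and> max_face_size \<Delta> = d \<and>
    (\<Sum>i\<le>d. monom (int (fnum \<Delta> i)) i) =
      (\<Sum>j=1..s+1. [:1, 1:] ^ \<delta> j) - (\<Sum>j=1..s. ([:1, 1:] :: int poly) ^ e j)"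
proof -
  define E where "E = e(s + 1 := if s = 0 then 0 else e s)"
  interpret core_forest "s + 1" \<delta> E
    unfolding E_def using assms(3-8) by (intro core_forest_padded) simp_all
  have sum_E: "(\<Sum>j=1..<s + 1. f (E j)) = (\<Sum>j=1..s. f (e j))" for f :: "nat \<Rightarrow> 'a::comm_monoid_add"
    unfolding atLeastLessThanSuc_atLeastAtMost[of 1 s, unfolded Suc_eq_plus1]
    by (rule sum.cong) (simp_all add: E_def)
  show ?thesis
  proof (intro exI conjI)
    have "int n = int (offset (Suc (s + 1)))"
      unfolding int_offset_last sum_E[of int] assms(9) ..
    then show "forest n complex"
      using forest_complex by simp
    show "max_face_size complex = d"
      using max_face_size_complex assms(5) by simp
    show "(\<Sum>i\<le>d. monom (int (fnum complex i)) i)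
      = (\<Sum>j=1..s+1. [:1, 1:] ^ \<delta> j) - (\<Sum>j=1..s. [:1, 1:] ^ e j)"
      using f_polynomial_complex unfolding sum_E[of "\<lambda>k. [:1, 1:] ^ k"] assms(5) .
  qed
qed

end
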